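(* Let $k_1,k_2\in\mathbb{Z}_{>0}$, $\theta_1=1/k_1$, $\theta_2=1/k_2$, and let $d\mu_1,d\mu_2$ be non-negative measures on $\mathbb{R}_+$ for which all the moments below are finite. Let $\langle\cdot,\cdot\rangle$ be the bilinear form $\langle f(x),g(y)\rangle=\int_{\mathbb{R}_+\times\mathbb{R}_+}\frac{f(x)g(y)}{x+y}\,d\mu_1(x)\,d\mu_2(y)$, and let $\{P_n(x^{\theta_1}),Q_n(y^{\theta_2})\}_{n\ge0}$ be the monic two-parameter Cauchy bi-orthogonal polynomials, i.e. $P_n$ (resp. $Q_n$) is a monic polynomial of degree $n$ in $x^{\theta_1}$ (resp. $y^{\theta_2}$) and $\langle P_n(x^{\theta_1}),Q_m(y^{\theta_2})\rangle=h_n\delta_{n,m}$ with $h_n>0$. Then for each $n\ge0$ the polynomials $P_n$ satisfy the $(k_1+k_2+2)$-term recurrence relation $$x\left(P_{n+1}(x^{\theta_1})+a_nP_n(x^{\theta_1})\right)=\sum_{\alpha=n-k_2}^{n+k_1+1}\eta_{n,\alpha}P_\alpha(x^{\theta_1}),$$ where $$a_n=-\frac{\int_{\mathbb{R}_+}P_{n+1}(x^{\theta_1})\,d\mu_1(x)}{\int_{\mathbb{R}_+}P_{n}(x^{\theta_1})\,d\mu_1(x)},\qquad \eta_{n,\alpha}=\frac{\langle x(P_{n+1}(x^{\theta_1})+a_nP_n(x^{\theta_1})),\, Q_\alpha(y^{\theta_2})\rangle}{\langle P_\alpha(x^{\theta_1}), Q_\alpha(y^{\theta_2})\rangle}$$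 (and $P_\alpha:=0$ for $\alpha<0$).
   Context: Moments are $m_{i,j}=\langle x^i,y^j\rangle$ for real $i,j\ge0$. The polynomials exist and are unique provided $\tau_n=\det(m_{(k-1)\theta_1,(l-1)\theta_2})_{k,l=1}^n\neq0$ for all $n$, which is assumed; then $h_n=\tau_{n+1}/\tau_n$. Quantities appearing in denominators (such as $\int P_n\,d\mu_1$) are assumed nonzero so that the coefficients are defined. *)

theory Defs
  imports "HOL-Analysis.Analysis" "HOL-Computational_Algebra.Polynomial"
begin

definition cauchy_form :: "real measure \<Rightarrow> real measure \<Rightarrow> (real \<Rightarrow> real) \<Rightarrow> (real \<Rightarrow> real) \<Rightarrow> real" where
  "cauchy_form M1 M2 f g = (\<integral>z. f (fst z) * g (snd z) / (fst z + snd z) \<partial>(M1 \<Otimes>\<^sub>M M2))"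

end

theory Submission
  imports Defs
begin

text \<open>
  Put \<open>R = P\<^sub>n\<^sub>+\<^sub>1 + a\<^sub>n P\<^sub>n\<close>. As \<open>x = (x\<^bsup>\<theta>\<^sub>1\<^esup>)\<^bsup>k\<^sub>1\<^esup>\<close> for \<open>x \<ge> 0\<close>, the left-hand side is \<open>S(x\<^bsup>\<theta>\<^sub>1\<^esup>)\<close>
  for the polynomial \<open>S = X\<^bsup>k\<^sub>1\<^esup> R\<close> of degree \<open>n + k\<^sub>1 + 1\<close>, and biorthogonality
  expands \<open>S\<close> in the basis \<open>P\<^sub>\<alpha>\<close> with the coefficients \<open>\<eta>\<^sub>n\<^sub>,\<^sub>\<alpha>\<close>. The coefficients with
  \<open>\<alpha> < n - k\<^sub>2\<close> vanish: the factor \<open>x + y\<close> cancels the kernel, so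
  \<open>\<langle>x R, Q\<^sub>\<alpha>\<rangle> + \<langle>R, y Q\<^sub>\<alpha>\<rangle> = \<integral>R d\<mu>\<^sub>1 \<cdot> \<integral>Q\<^sub>\<alpha> d\<mu>\<^sub>2\<close>. Here \<open>\<integral>R d\<mu>\<^sub>1 = 0\<close> by the choice of
  \<open>a\<^sub>n\<close>, and \<open>y Q\<^sub>\<alpha>(y\<^bsup>\<theta>\<^sub>2\<^esup>)\<close> is a polynomial of degree \<open>\<alpha> + k\<^sub>2 < n\<close> in \<open>y\<^bsup>\<theta>\<^sub>2\<^esup>\<close>, hence a
  combination of \<open>Q\<^sub>0, \<dots>, Q\<^sub>n\<^sub>-\<^sub>1\<close>, which are orthogonal to both \<open>P\<^sub>n\<close> and \<open>P\<^sub>n\<^sub>+\<^sub>1\<close>.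
\<close>

lemma borel_measurable_poly [measurable]:
  fixes f :: "'a \<Rightarrow> real"
  assumes [measurable]: "f \<in> borel_measurable M"
  shows "(\<lambda>x. poly p (f x)) \<in> borel_measurable M"
  unfolding poly_altdef by measurable

lemma powr_power_eq_self:
  fixes x \<theta> :: real
  assumes "\<theta> * real k = 1" and "x \<ge> 0"
  shows "(x powr \<theta>) ^ k = x"
proof (cases "x = 0")
  case True
  then show ?thesis using assms(1) by (cases k) auto
next
  case False
  then have "(x powr \<theta>) ^ k = x powr (\<theta> * real k)"
    using assms(2) by (simp add: powr_realpow[symmetric] powr_powr)
  then show ?thesis using assms by simp
qed

lemma poly_monom_mult_powr:
  assumes "\<theta> * real k = 1" and "x \<ge> 0"
  shows "poly (monom 1 k * p) (x powr \<theta>) = x * poly p (x powr \<theta>)"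
  using powr_power_eq_self[OF assms] by (simp add: poly_monom)

lemma degree_monom_mult_le: "degree (monom a k * p) \<le> k + degree p"
  by (meson add_right_mono degree_monom_le degree_mult_le order_trans)

lemma degree_basis_expansion_exists:
  fixes P :: "nat \<Rightarrow> 'a::field poly"
  assumes degree_P: "\<And>m. degree (P m) = m" and P_nonzero: "\<And>m. P m \<noteq> 0"
  shows "degree S \<le> N \<Longrightarrow> \<exists>c. S = (\<Sum>\<alpha>\<le>N. smult (c \<alpha>) (P \<alpha>))"
proof (induction N arbitrary: S)
  case 0
  then have "S = smult (coeff S 0 / coeff (P 0) 0) (P 0)"
    using degree_P[of 0] P_nonzero[of 0]
    by (auto elim!: degree_eq_zeroE)
  then show ?case by (intro exI[of _ "\<lambda>_. coeff S 0 / coeff (P 0) 0"]) simp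
next
  case (Suc N)
  define c' where "c' = coeff S (Suc N) / lead_coeff (P (Suc N))"
  define S' where "S' = S - smult c' (P (Suc N))"
  have "degree S' \<le> Suc N"
    unfolding S'_def using Suc.prems degree_P[of "Suc N"]
    by (metis degree_diff_le degree_smult_le)
  moreover have "coeff S' (Suc N) = 0"
    unfolding S'_def c'_def using leading_coeff_neq_0[OF P_nonzero[of "Suc N"]] by (simp add: degree_P)
  ultimately have "degree S' \<le> N"
    by (intro degree_le) (metis Suc_lessI coeff_eq_0 le_less_trans)
  then obtain c where "S' = (\<Sum>\<alpha>\<le>N. smult (c \<alpha>) (P \<alpha>))" using Suc.IH by blast
  then have "S = (\<Sum>\<alpha>\<le>Suc N. smult ((c(Suc N := c')) \<alpha>) (P \<alpha>))"
    unfolding S'_def by (simp add: algebra_simps)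
  then show ?case by blast
qed

locale cauchy_pairing =
  M1: sigma_finite_measure M1 + M2: sigma_finite_measure M2
  for M1 M2 :: "real measure" +
  fixes \<theta>1 \<theta>2 :: real and k1 k2 :: nat
  assumes sets_M1: "sets M1 = sets borel" and sets_M2: "sets M2 = sets borel"
    and M1_nonneg: "emeasure M1 {x. x < 0} = 0" and M2_nonneg: "emeasure M2 {y. y < 0} = 0"
    and origin_null: "emeasure (M1 \<Otimes>\<^sub>M M2) {(0, 0)} = 0"
    and \<theta>1_k1: "\<theta>1 * real k1 = 1" and \<theta>2_k2: "\<theta>2 * real k2 = 1"
    and moments: "\<And>i j. integrable (M1 \<Otimes>\<^sub>M M2)
        (\<lambda>z. (fst z powr \<theta>1) ^ i * (snd z powr \<theta>2) ^ j / (fst z + snd z))"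
    and moments1: "\<And>i. integrable M1 (\<lambda>x. (x powr \<theta>1) ^ i)"
begin

sublocale pair_sigma_finite M1 M2 ..

declare sets_M1 [measurable_cong] sets_M2 [measurable_cong]

lemma AE_positive_quadrant:
  "AE z in M1 \<Otimes>\<^sub>M M2. fst z \<ge> 0 \<and> snd z \<ge> 0 \<and> fst z + snd z > 0"
proof -
  have "AE x in M1. x \<ge> 0" "AE y in M2. y \<ge> 0"
    using M1_nonneg M2_nonneg by (auto intro!: AE_I'[of "{x. x < 0}"] simp: null_sets_def)
  then have "AE z in M1 \<Otimes>\<^sub>M M2. fst z \<ge> 0 \<and> snd z \<ge> 0"
    by (intro AE_pair_measure) (auto elim: AE_mp)
  moreover have "{0} \<times> {0} \<in> sets (M1 \<Otimes>\<^sub>M M2)"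
    by (intro pair_measureI) (simp_all add: sets_M1 sets_M2)
  then have "{(0, 0)} \<in> null_sets (M1 \<Otimes>\<^sub>M M2)"
    using origin_null by (simp add: null_sets_def)
  then have "AE z in M1 \<Otimes>\<^sub>M M2. z \<noteq> (0, 0)"
    using AE_not_in by force
  ultimately show ?thesis
    by eventually_elim (auto simp: prod_eq_iff)
qed

lemma cauchy_form_cong_nonneg:
  fixes f f' g g' :: "real \<Rightarrow> real"
  assumes [measurable]: "f \<in> borel_measurable borel" "f' \<in> borel_measurable borel"
    "g \<in> borel_measurable borel" "g' \<in> borel_measurable borel"
  assumes "\<And>x. x \<ge> 0 \<Longrightarrow> f x = f' x" and "\<And>y. y \<ge> 0 \<Longrightarrow> g y = g' y"
  shows "cauchy_form M1 M2 f g = cauchy_form M1 M2 f' g'"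
  unfolding cauchy_form_def
  by (rule integral_cong_AE) (use AE_positive_quadrant assms(5,6) in \<open>auto elim!: AE_mp\<close>)

definition pairing :: "real poly \<Rightarrow> real poly \<Rightarrow> real" where
  "pairing p q = cauchy_form M1 M2 (\<lambda>x. poly p (x powr \<theta>1)) (\<lambda>y. poly q (y powr \<theta>2))"

lemma integrable_pairing:
  "integrable (M1 \<Otimes>\<^sub>M M2) (\<lambda>z. poly p (fst z powr \<theta>1) * poly q (snd z powr \<theta>2) / (fst z + snd z))"
proof -
  have "integrable (M1 \<Otimes>\<^sub>M M2) (\<lambda>z. \<Sum>j\<le>degree q. \<Sum>i\<le>degree p. (coeff p i * coeff q j) *
      ((fst z powr \<theta>1) ^ i * (snd z powr \<theta>2) ^ j / (fst z + snd z)))"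
    by (intro Bochner_Integration.integrable_sum integrable_mult_right moments)
  then show ?thesis
    unfolding poly_altdef
    by (simp add: sum_distrib_left sum_distrib_right sum_divide_distrib mult_ac)
qed

lemma integrable_poly_M1: "integrable M1 (\<lambda>x. poly p (x powr \<theta>1))"
  unfolding poly_altdef by (intro Bochner_Integration.integrable_sum integrable_mult_right moments1)

lemma pairing_add_left: "pairing (p1 + p2) q = pairing p1 q + pairing p2 q"
  unfolding pairing_def cauchy_form_def
  by (simp add: distrib_right add_divide_distrib integrable_pairing)

lemma pairing_add_right: "pairing p (q1 + q2) = pairing p q1 + pairing p q2"
  unfolding pairing_def cauchy_form_def
  by (simp add: distrib_left add_divide_distrib integrable_pairing)

lemma pairing_smult_left [simp]: "pairing (smult c p) q = c * pairing p q"
  unfolding pairing_def cauchy_form_def by (simp add: mult.assoc flip: integral_mult_right_zero)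

lemma pairing_smult_right [simp]: "pairing p (smult c q) = c * pairing p q"
  unfolding pairing_def cauchy_form_def by (simp add: mult_ac flip: integral_mult_right_zero)

lemma pairing_zero_left [simp]: "pairing 0 q = 0"
  and pairing_zero_right [simp]: "pairing p 0 = 0"
  unfolding pairing_def cauchy_form_def by simp_all

lemma pairing_sum_left: "pairing (\<Sum>i\<in>A. p i) q = (\<Sum>i\<in>A. pairing (p i) q)"
  by (induction A rule: infinite_finite_induct)
    (simp_all add: pairing_add_left)

lemma pairing_sum_right: "pairing p (\<Sum>i\<in>A. q i) = (\<Sum>i\<in>A. pairing p (q i))"
  by (induction A rule: infinite_finite_induct)
    (simp_all add: pairing_add_right)

lemma cauchy_form_mult_left_eq_pairing:
  "cauchy_form M1 M2 (\<lambda>x. x * poly p (x powr \<theta>1)) (\<lambda>y. poly q (y powr \<theta>2))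
     = pairing (monom 1 k1 * p) q"
  unfolding pairing_def
  by (rule cauchy_form_cong_nonneg; (simp only: poly_monom_mult_powr[OF \<theta>1_k1] | measurable))

lemma pairing_monom_left_add_monom_right:
  "pairing (monom 1 k1 * p) q + pairing p (monom 1 k2 * q)
     = (\<integral>x. poly p (x powr \<theta>1) \<partial>M1) * (\<integral>y. poly q (y powr \<theta>2) \<partial>M2)"
proof -
  define F where "F p' q' z = poly p' (fst z powr \<theta>1) * poly q' (snd z powr \<theta>2) / (fst z + snd z)"
    for p' q' and z :: "real \<times> real"
  define G where "G z = poly p (fst z powr \<theta>1) * poly q (snd z powr \<theta>2)" for z :: "real \<times> real"
  have [measurable]: "G \<in> borel_measurable (M1 \<Otimes>\<^sub>M M2)"
    unfolding G_def by measurable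
  have F_integrable: "integrable (M1 \<Otimes>\<^sub>M M2) (F p' q')" for p' q'
    unfolding F_def by (rule integrable_pairing)
  have "AE z in M1 \<Otimes>\<^sub>M M2. F (monom 1 k1 * p) q z + F p (monom 1 k2 * q) z = G z"
    using AE_positive_quadrant
  proof eventually_elim
    case (elim z)
    then have "F (monom 1 k1 * p) q z + F p (monom 1 k2 * q) z = (fst z + snd z) * G z / (fst z + snd z)"
      unfolding F_def G_def
      by (simp only: poly_monom_mult_powr \<theta>1_k1 \<theta>2_k2) (simp add: distrib_right add_divide_distrib mult_ac)
    then show ?case using elim by simp
  qed
  note F_eq_G = integral_cong_AE[OF _ _ this] integrable_cong_AE_imp[OF _ _ this]
  have G_integrable: "integrable (M1 \<Otimes>\<^sub>M M2) G"
    by (rule F_eq_G(2)) (simp_all add: F_integrable)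
  have "pairing (monom 1 k1 * p) q + pairing p (monom 1 k2 * q)
      = (\<integral>z. F (monom 1 k1 * p) q z + F p (monom 1 k2 * q) z \<partial>(M1 \<Otimes>\<^sub>M M2))"
    unfolding pairing_def cauchy_form_def F_def
    by (intro Bochner_Integration.integral_add[symmetric] integrable_pairing)
  also have "\<dots> = integral\<^sup>L (M1 \<Otimes>\<^sub>M M2) G"
    by (rule F_eq_G(1)) (simp_all add: F_def)
  also have "\<dots> = (\<integral>x. (\<integral>y. G (x, y) \<partial>M2) \<partial>M1)"
    using integral_fst'[OF G_integrable] by simp
  also have "\<dots> = (\<integral>x. poly p (x powr \<theta>1) \<partial>M1) * (\<integral>y. poly q (y powr \<theta>2) \<partial>M2)"
    by (simp add: G_def)
  finally show ?thesis .
qed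

end

locale cauchy_biorthogonal = cauchy_pairing +
  fixes P Q :: "nat \<Rightarrow> real poly"
  assumes degree_P: "\<And>m. degree (P m) = m" and P_nonzero: "\<And>m. P m \<noteq> 0"
    and degree_Q: "\<And>m. degree (Q m) = m" and Q_nonzero: "\<And>m. Q m \<noteq> 0"
    and biorthogonal: "\<And>m l. m \<noteq> l \<Longrightarrow> pairing (P m) (Q l) = 0"
    and pairing_diagonal_nonzero: "\<And>m. pairing (P m) (Q m) \<noteq> 0"
begin

lemma biorthogonal_expansion:
  assumes "degree S \<le> N"
  shows "S = (\<Sum>\<alpha>\<le>N. smult (pairing S (Q \<alpha>) / pairing (P \<alpha>) (Q \<alpha>)) (P \<alpha>))"
proof -
  obtain c where c: "S = (\<Sum>\<alpha>\<le>N. smult (c \<alpha>) (P \<alpha>))"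
    using degree_basis_expansion_exists[OF degree_P P_nonzero assms] by blast
  have "pairing S (Q \<beta>) = c \<beta> * pairing (P \<beta>) (Q \<beta>)" if "\<beta> \<le> N" for \<beta>
  proof -
    have "pairing S (Q \<beta>) = (\<Sum>\<alpha>\<le>N. c \<alpha> * pairing (P \<alpha>) (Q \<beta>))"
      by (subst c) (simp add: pairing_sum_left)
    also have "\<dots> = (\<Sum>\<alpha>\<in>{\<beta>}. c \<alpha> * pairing (P \<alpha>) (Q \<beta>))"
      by (rule sum.mono_neutral_right) (use that biorthogonal in auto)
    finally show ?thesis by simp
  qed
  then have "c \<alpha> = pairing S (Q \<alpha>) / pairing (P \<alpha>) (Q \<alpha>)" if "\<alpha> \<le> N" for \<alpha>
    using that pairing_diagonal_nonzero by simp
  then show ?thesis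
    by (subst c) (intro sum.cong refl; simp)
qed

lemma pairing_eq_0_if_orthogonal_Q:
  assumes "\<And>\<gamma>. \<gamma> \<le> degree q \<Longrightarrow> pairing p (Q \<gamma>) = 0"
  shows "pairing p q = 0"
proof -
  obtain d where "q = (\<Sum>\<gamma>\<le>degree q. smult (d \<gamma>) (Q \<gamma>))"
    using degree_basis_expansion_exists[OF degree_Q Q_nonzero order.refl] by blast
  then have "pairing p q = (\<Sum>\<gamma>\<le>degree q. d \<gamma> * pairing p (Q \<gamma>))"
    by (metis (no_types, lifting) pairing_smult_right pairing_sum_right sum.cong)
  also have "\<dots> = 0"
    using assms by simp
  finally show ?thesis .
qed

lemma monom_mult_biorthogonal_expansion:
  assumes degree_R: "degree R \<le> Suc n"
    and integral_R: "(\<integral>x. poly R (x powr \<theta>1) \<partial>M1) = 0"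
    and R_orthogonal: "\<And>\<gamma>. \<gamma> < n \<Longrightarrow> pairing R (Q \<gamma>) = 0"
  \<comment> \<open>\<open>n - k2\<close> truncates at \<open>0\<close>, matching the convention \<open>P\<^sub>\<alpha> = 0\<close> for \<open>\<alpha> < 0\<close>.\<close>
  shows "monom 1 k1 * R = (\<Sum>\<alpha> = n - k2 .. n + k1 + 1.
           smult (pairing (monom 1 k1 * R) (Q \<alpha>) / pairing (P \<alpha>) (Q \<alpha>)) (P \<alpha>))"
proof -
  let ?S = "monom 1 k1 * R"
  have vanish: "pairing ?S (Q \<beta>) = 0" if "\<beta> < n - k2" for \<beta>
  proof -
    have "pairing R (monom 1 k2 * Q \<beta>) = 0"
    proof (rule pairing_eq_0_if_orthogonal_Q)
      fix \<gamma> assume "\<gamma> \<le> degree (monom 1 k2 * Q \<beta>)"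
      then show "pairing R (Q \<gamma>) = 0"
        using degree_monom_mult_le[of 1 k2 "Q \<beta>"] that by (intro R_orthogonal) (simp add: degree_Q)
    qed
    then show ?thesis
      using pairing_monom_left_add_monom_right[of R "Q \<beta>"] integral_R by simp
  qed
  have "degree ?S \<le> n + k1 + 1"
    using degree_monom_mult_le[of 1 k1 R] degree_R by linarith
  then have "?S = (\<Sum>\<alpha>\<le>n + k1 + 1. smult (pairing ?S (Q \<alpha>) / pairing (P \<alpha>) (Q \<alpha>)) (P \<alpha>))"
    by (rule biorthogonal_expansion)
  also have "\<dots> = (\<Sum>\<alpha> = n - k2 .. n + k1 + 1. smult (pairing ?S (Q \<alpha>) / pairing (P \<alpha>) (Q \<alpha>)) (P \<alpha>))"
    by (rule sum.mono_neutral_right) (auto simp: vanish)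
  finally show ?thesis .
qed

end

theorem proposition2p1:
  fixes k1 k2 :: nat and M1 M2 :: "real measure" and P Q :: "nat \<Rightarrow> real poly" and n :: nat
  defines "\<theta>1 \<equiv> 1 / real k1" and "\<theta>2 \<equiv> 1 / real k2"
  defines "a \<equiv> - (\<integral>x. poly (P (Suc n)) (x powr \<theta>1) \<partial>M1) / (\<integral>x. poly (P n) (x powr \<theta>1) \<partial>M1)"
  defines "\<eta> \<equiv> (\<lambda>\<alpha>::nat.
      cauchy_form M1 M2 (\<lambda>x. x * (poly (P (Suc n)) (x powr \<theta>1) + a * poly (P n) (x powr \<theta>1)))
                        (\<lambda>y. poly (Q \<alpha>) (y powr \<theta>2))
    / cauchy_form M1 M2 (\<lambda>x. poly (P \<alpha>) (x powr \<theta>1)) (\<lambda>y. poly (Q \<alpha>) (y powr \<theta>2)))"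
  assumes k1_pos: "k1 > 0" and k2_pos: "k2 > 0"
    and M1_borel: "sets M1 = sets borel" and M2_borel: "sets M2 = sets borel"
    and M1_sf: "sigma_finite_measure M1" and M2_sf: "sigma_finite_measure M2"
    and M1_supp: "emeasure M1 {x. x < 0} = 0" and M2_supp: "emeasure M2 {y. y < 0} = 0"
    and origin_null: "emeasure (M1 \<Otimes>\<^sub>M M2) {(0, 0)} = 0"
    and moments: "\<And>i j::nat. integrable (M1 \<Otimes>\<^sub>M M2)
        (\<lambda>z. (fst z powr \<theta>1) ^ i * (snd z powr \<theta>2) ^ j / (fst z + snd z))"
    and moments1: "\<And>i::nat. integrable M1 (\<lambda>x. (x powr \<theta>1) ^ i)"
    and P_deg: "\<And>m. degree (P m) = m" and P_monic: "\<And>m. lead_coeff (P m) = 1"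
    and Q_deg: "\<And>m. degree (Q m) = m" and Q_monic: "\<And>m. lead_coeff (Q m) = 1"
    and biorth: "\<And>m l. m \<noteq> l \<Longrightarrow>
        cauchy_form M1 M2 (\<lambda>x. poly (P m) (x powr \<theta>1)) (\<lambda>y. poly (Q l) (y powr \<theta>2)) = 0"
    and h_pos: "\<And>m. cauchy_form M1 M2 (\<lambda>x. poly (P m) (x powr \<theta>1)) (\<lambda>y. poly (Q m) (y powr \<theta>2)) > 0"
    and denom_nz: "(\<integral>x. poly (P n) (x powr \<theta>1) \<partial>M1) \<noteq> 0"
  shows "\<forall>x::real. x \<ge> 0 \<longrightarrow>
    x * (poly (P (Suc n)) (x powr \<theta>1) + a * poly (P n) (x powr \<theta>1))
      = (\<Sum>\<alpha> = n - k2 .. n + k1 + 1. \<eta> \<alpha> * poly (P \<alpha>) (x powr \<theta>1))"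
proof -
  have "\<theta>1 * real k1 = 1" "\<theta>2 * real k2 = 1"
    using k1_pos k2_pos by (simp_all add: \<theta>1_def \<theta>2_def)
  then interpret cauchy_pairing M1 M2 \<theta>1 \<theta>2 k1 k2
    unfolding cauchy_pairing_def cauchy_pairing_axioms_def
    by (simp add: M1_sf M2_sf M1_borel M2_borel M1_supp M2_supp origin_null moments moments1)
  have "P m \<noteq> 0" "Q m \<noteq> 0" "pairing (P m) (Q m) \<noteq> 0" for m
    using P_monic[of m] Q_monic[of m] h_pos[of m] by (auto simp: pairing_def)
  then interpret cauchy_biorthogonal M1 M2 \<theta>1 \<theta>2 k1 k2 P Q
    by unfold_locales (simp_all add: P_deg Q_deg pairing_def biorth)
  define R where "R = P (Suc n) + smult a (P n)"
  have poly_R: "poly R t = poly (P (Suc n)) t + a * poly (P n) t" for t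
    by (simp add: R_def)
  have expansion: "monom 1 k1 * R = (\<Sum>\<alpha> = n - k2 .. n + k1 + 1. smult (\<eta> \<alpha>) (P \<alpha>))"
    unfolding \<eta>_def poly_R[symmetric] cauchy_form_mult_left_eq_pairing pairing_def[symmetric]
  proof (rule monom_mult_biorthogonal_expansion)
    show "degree R \<le> Suc n"
      unfolding R_def by (rule degree_add_le) (simp_all add: P_deg)
    show "(\<integral>x. poly R (x powr \<theta>1) \<partial>M1) = 0"
      using denom_nz by (simp add: poly_R a_def integrable_poly_M1)
    show "pairing R (Q \<gamma>) = 0" if "\<gamma> < n" for \<gamma>
      using that by (simp add: R_def pairing_add_left biorthogonal)
  qed
  have "x * poly R (x powr \<theta>1) = (\<Sum>\<alpha> = n - k2 .. n + k1 + 1. \<eta> \<alpha> * poly (P \<alpha>) (x powr \<theta>1))"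
    if "x \<ge> 0" for x
    by (simp only: poly_monom_mult_powr[OF \<theta>1_k1 that, symmetric] expansion poly_sum poly_smult)
  then show ?thesis
    unfolding poly_R by blast
qed

end
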